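(* Let $\mathcal{G}\subseteq\{0,1\}^{\mathcal{X}}$, $\mathcal{H}\subseteq\{-1,+1\}^{\mathcal{X}}$, and $c^*\in\mathcal{C}(\mathcal{G},\mathcal{H})$. For $c\colon\mathcal{X}\to\{-1,+1\}$ let $(c\triangle c^* )(x)=\mathbf{1}[c(x)\neq c^*(x)]$. (i) For fixed $g\in\mathcal{G}$, the class $\mathcal{F}_g=\{x\mapsto g(x)(c\triangle c^* )(x) : c\in\mathcal{C}(\mathcal{G},\mathcal{H})\}$ satisfies $\mathcal{S}_{\mathcal{X}}(\mathcal{F}_g,k)\le \mathcal{S}_g(\mathcal{H},k)$ for every $k\ge1$. (ii) The class $\mathcal{F}=\{x\mapsto g(x)(c\triangle c^* )(x) : g\in\mathcal{G},\ c\in\mathcal{C}(\mathcal{G},\mathcal{H})\}$ satisfies $\mathcal{S}_{\mathcal{X}}(\mathcal{F},k)\le \mathcal{S}_{\mathcal{X}}(\mathcal{G},k)\cdot\sup_{g\in\mathcal{G}}\mathcal{S}_g(\mathcal{H},k)$ for every $k\ge 1$.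
   Context: A group $g \in \mathcal{G}$ is identified both with a function $g\colon \mathcal{X}\to\{0,1\}$ and with the subset $\{x : g(x)=1\}\subseteq \mathcal{X}$. Given $\mathcal{G}\subseteq\{0,1\}^{\mathcal{X}}$ and $\mathcal{H}\subseteq\{-1,+1\}^{\mathcal{X}}$ on the same domain $\mathcal{X}$, the set of group-realizable concepts $\mathcal{C}(\mathcal{G},\mathcal{H})\subseteq\{-1,+1\}^{\mathcal{X}}$ is the set of all functions $c\colon\mathcal{X}\to\{-1,+1\}$ such that for each $g\in\mathcal{G}$ there exists $h\in\mathcal{H}$ with $c(x)=h(x)$ for all $x\in g$. For a class $\mathcal{F}$ of functions on a domain $\mathcal{Z}$, the $k$-th shattering coefficient is $\mathcal{S}_{\mathcal{Z}}(\mathcal{F},k)=\sup_{z_1,\dots,z_k\in\mathcal{Z}}\left|\{(f(z_1),\dots,f(z_k)) : f\in\mathcal{F}\}\right|$; $\mathcal{S}_g(\mathcal{H},k)$ denotes this quantity with domain $\mathcal{Z}=g$ (points restricted to $g$). *)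

theory Defs
  imports Main
begin

text \<open>Groups are functions X \<rightarrow> {0,1} (values in int), hypotheses are functions
X \<rightarrow> {-1,+1} (values in int). A group g is identified with the set {x. g x = 1}.\<close>

definition group_set :: "('a \<Rightarrow> int) \<Rightarrow> 'a set" where
  "group_set g = {x. g x = 1}"

definition group_realizable :: "('a \<Rightarrow> int) set \<Rightarrow> ('a \<Rightarrow> int) set \<Rightarrow> ('a \<Rightarrow> int) set" where
  "group_realizable G H =
     {c. (\<forall>x. c x \<in> {-1, 1}) \<and> (\<forall>g\<in>G. \<exists>h\<in>H. \<forall>x\<in>group_set g. c x = h x)}"

definition shatter_coeff :: "'a set \<Rightarrow> ('a \<Rightarrow> 'b) set \<Rightarrow> nat \<Rightarrow> nat" where
  "shatter_coeff Z F k =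
     Sup {card ((\<lambda>f. map f zs) ` F) | zs. length zs = k \<and> set zs \<subseteq> Z}"

definition symdiff_ind :: "('a \<Rightarrow> int) \<Rightarrow> ('a \<Rightarrow> int) \<Rightarrow> 'a \<Rightarrow> int" where
  "symdiff_ind c cstar x = (if c x \<noteq> cstar x then 1 else 0)"

end

theory Submission
  imports Defs
begin

text \<open>On a group g every group-realizable concept agrees with some h \<in> H, and outside g the
mask g kills the label, so the trace of g (c \<triangle> c*) on k points is a function of the trace of h
on k points of g; this gives (i). The trace of g (c \<triangle> c*) depends on g only through the trace
of g, so the traces of the whole class split into at most S(G,k) blocks, each of size at most
sup S_g(H,k); a group with empty support only contributes the zero trace, which the supremum
covers as soon as some group is nonempty.\<close>

definition traces :: "('a \<Rightarrow> 'b) set \<Rightarrow> 'a list \<Rightarrow> 'b list set" where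
  "traces F zs = (\<lambda>f. map f zs) ` F"

lemma shatter_coeff_traces:
  "shatter_coeff Z F k = Sup {card (traces F zs) | zs. length zs = k \<and> set zs \<subseteq> Z}"
  by (simp add: shatter_coeff_def traces_def)

lemma traces_subset_lists:
  assumes "\<forall>f\<in>F. \<forall>x. f x \<in> V"
  shows "traces F zs \<subseteq> {xs. set xs \<subseteq> V \<and> length xs = length zs}"
  using assms by (auto simp: traces_def)

lemma finite_traces:
  assumes "\<forall>f\<in>F. \<forall>x. f x \<in> V" "finite V"
  shows "finite (traces F zs)"
  using finite_subset[OF traces_subset_lists[OF assms(1)]] finite_lists_length_eq[OF assms(2)]
  by blast

lemma card_traces_le_power:
  assumes "\<forall>f\<in>F. \<forall>x. f x \<in> V" "finite V"
  shows "card (traces F zs) \<le> card V ^ length zs"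
  using card_mono[OF _ traces_subset_lists[OF assms(1)]] finite_lists_length_eq[OF assms(2)]
    card_lists_length_eq[OF assms(2)]
  by simp

lemma shatter_coeff_leI:
  assumes "\<And>zs. length zs = k \<Longrightarrow> set zs \<subseteq> Z \<Longrightarrow> card (traces F zs) \<le> M"
  shows "shatter_coeff Z F k \<le> M"
proof (cases "{card (traces F zs) | zs. length zs = k \<and> set zs \<subseteq> Z} = {}")
  case False
  then show ?thesis
    unfolding shatter_coeff_traces by (rule cSup_least) (use assms in auto)
next
  case True
  then show ?thesis
    unfolding shatter_coeff_traces by (simp only: Sup_nat_empty)
qed

lemma shatter_coeff_le_card_power:
  assumes "\<forall>f\<in>F. \<forall>x. f x \<in> V" "finite V"
  shows "shatter_coeff Z F k \<le> card V ^ k"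
  using card_traces_le_power[OF assms] by (intro shatter_coeff_leI) auto

lemma card_traces_le_shatter_coeff:
  assumes "\<forall>f\<in>F. \<forall>x. f x \<in> V" "finite V" "length zs = k" "set zs \<subseteq> Z"
  shows "card (traces F zs) \<le> shatter_coeff Z F k"
  unfolding shatter_coeff_traces
proof (rule cSup_upper)
  show "bdd_above {card (traces F zs) | zs. length zs = k \<and> set zs \<subseteq> Z}"
    using card_traces_le_power[OF assms(1,2)] by (intro bdd_aboveI[of _ "card V ^ k"]) auto
qed (use assms(3,4) in blast)

lemma card_traces_masked_le_shatter_coeff:
  assumes g01: "\<forall>x. g x \<in> {0, 1}" and x0: "x0 \<in> group_set g"
    and agree: "\<forall>c\<in>C. \<exists>h\<in>H. \<forall>x\<in>group_set g. c x = h x"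
    and Hpm: "\<forall>h\<in>H. \<forall>x. h x \<in> {-1, 1}"
  shows "card (traces ((\<lambda>c x. g x * symdiff_ind c cstar x) ` C) zs)
    \<le> shatter_coeff (group_set g) H (length zs)"
proof -
  \<comment> \<open>points outside g carry no information, and S_g only admits points of g\<close>
  define lift where "lift z = (if g z = 1 then z else x0)" for z
  define mask where "mask ys = map2 (\<lambda>z y. g z * (if y \<noteq> cstar z then 1 else 0)) zs ys" for ys
  have "traces ((\<lambda>c x. g x * symdiff_ind c cstar x) ` C) zs \<subseteq> mask ` traces H (map lift zs)"
  proof
    fix p assume "p \<in> traces ((\<lambda>c x. g x * symdiff_ind c cstar x) ` C) zs"
    then obtain c where "c \<in> C" and p: "p = map (\<lambda>x. g x * symdiff_ind c cstar x) zs"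
      by (auto simp: traces_def)
    then obtain h where h: "h \<in> H" "\<forall>x\<in>group_set g. c x = h x"
      using agree by blast
    have "g z * symdiff_ind c cstar z = g z * (if h (lift z) \<noteq> cstar z then 1 else 0)" for z
      using g01 h(2) by (cases "g z = 1") (auto simp: lift_def symdiff_ind_def group_set_def)
    then have "p = mask (map h (map lift zs))"
      by (simp add: p mask_def zip_map2 zip_same_conv_map)
    then show "p \<in> mask ` traces H (map lift zs)"
      using h(1) by (auto simp: traces_def)
  qed
  moreover have fin: "finite (traces H (map lift zs))"
    using finite_traces[OF Hpm] by simp
  ultimately have "card (traces ((\<lambda>c x. g x * symdiff_ind c cstar x) ` C) zs)
      \<le> card (traces H (map lift zs))"
    by (meson card_image_le card_mono finite_imageI le_trans)
  also have "\<dots> \<le> shatter_coeff (group_set g) H (length zs)"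
    using x0 by (intro card_traces_le_shatter_coeff[OF Hpm]) (auto simp: lift_def group_set_def)
  finally show ?thesis .
qed

lemma card_traces_products_le:
  fixes G :: "('a \<Rightarrow> 'b::times) set" and d :: "'c \<Rightarrow> 'a \<Rightarrow> 'b"
  assumes "finite (traces G zs)"
    and "\<forall>g\<in>G. card (traces ((\<lambda>c x. g x * d c x) ` C) zs) \<le> M"
  shows "card (traces {\<lambda>x. g x * d c x | g c. g \<in> G \<and> c \<in> C} zs) \<le> card (traces G zs) * M"
proof -
  define B where "B p = (\<lambda>c. map2 (*) p (map (d c) zs)) ` C" for p
  have B_trace: "B (map g zs) = traces ((\<lambda>c x. g x * d c x) ` C) zs" for g
    by (auto simp: B_def traces_def zip_map_map zip_same_conv_map image_image)
  have "traces {\<lambda>x. g x * d c x | g c. g \<in> G \<and> c \<in> C} zs = (\<Union>p\<in>traces G zs. B p)"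
    by (auto simp: B_trace traces_def)
  then have "card (traces {\<lambda>x. g x * d c x | g c. g \<in> G \<and> c \<in> C} zs)
      \<le> (\<Sum>p\<in>traces G zs. card (B p))"
    by (simp add: card_UN_le assms(1))
  also have "\<dots> \<le> card (traces G zs) * M"
  proof -
    have "card (B p) \<le> M" if "p \<in> traces G zs" for p
      using that assms(2) B_trace unfolding traces_def by auto
    then show ?thesis
      using sum_bounded_above[of "traces G zs" "\<lambda>p. card (B p)" M] by simp
  qed
  finally show ?thesis .
qed

lemma shatter_coeff_products_le:
  fixes G :: "('a \<Rightarrow> 'b::times) set" and d :: "'c \<Rightarrow> 'a \<Rightarrow> 'b"
  assumes "\<forall>g\<in>G. \<forall>x. g x \<in> V" "finite V"
    and "\<And>g zs. g \<in> G \<Longrightarrow> length zs = k \<Longrightarrow> card (traces ((\<lambda>c x. g x * d c x) ` C) zs) \<le> M"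
  shows "shatter_coeff Z {\<lambda>x. g x * d c x | g c. g \<in> G \<and> c \<in> C} k \<le> shatter_coeff Z G k * M"
proof (rule shatter_coeff_leI)
  fix zs assume zs: "length zs = k" "set zs \<subseteq> Z"
  have "card (traces {\<lambda>x. g x * d c x | g c. g \<in> G \<and> c \<in> C} zs) \<le> card (traces G zs) * M"
    using assms(3) zs(1) by (intro card_traces_products_le finite_traces[OF assms(1,2)]) auto
  also have "\<dots> \<le> shatter_coeff Z G k * M"
    using card_traces_le_shatter_coeff[OF assms(1,2) zs] by simp
  finally show "card (traces {\<lambda>x. g x * d c x | g c. g \<in> G \<and> c \<in> C} zs)
      \<le> shatter_coeff Z G k * M" .
qed

lemma card_traces_masked_empty_group:
  assumes "\<forall>x. g x \<in> {0, 1}" and "group_set g = {}"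
  shows "card (traces ((\<lambda>c x. g x * symdiff_ind c cstar x) ` C) zs) \<le> 1"
proof -
  have "\<forall>x. g x = 0"
    using assms by (auto simp: group_set_def)
  then have "traces ((\<lambda>c x. g x * symdiff_ind c cstar x) ` C) zs \<subseteq> {map (\<lambda>x. 0) zs}"
    by (auto simp: traces_def)
  then show ?thesis
    using card_mono[of "{map (\<lambda>x. 0::int) zs}"] by fastforce
qed

lemma one_le_shatter_coeff:
  assumes "\<forall>f\<in>F. \<forall>x. f x \<in> V" "finite V" "F \<noteq> {}" "z \<in> Z"
  shows "1 \<le> shatter_coeff Z F k"
proof -
  have "traces F (replicate k z) \<noteq> {}"
    using assms(3) by (simp add: traces_def)
  then have "1 \<le> card (traces F (replicate k z))"
    using finite_traces[OF assms(1,2)] by (simp add: Suc_le_eq card_gt_0_iff)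
  also have "\<dots> \<le> shatter_coeff Z F k"
    using assms(4) by (intro card_traces_le_shatter_coeff[OF assms(1,2)]) auto
  finally show ?thesis .
qed

lemma card_traces_masked_le_SUP:
  assumes G01: "\<forall>g\<in>G. \<forall>x. g x \<in> {0, 1}" and Hpm: "\<forall>h\<in>H. \<forall>x. h x \<in> {-1, 1}"
    and "H \<noteq> {}" and g1: "g1 \<in> G" "group_set g1 \<noteq> {}" and g: "g \<in> G"
  shows "card (traces ((\<lambda>c x. g x * symdiff_ind c cstar x) ` group_realizable G H) zs)
    \<le> (SUP g\<in>G. shatter_coeff (group_set g) H (length zs))"
proof -
  let ?S = "\<lambda>g. shatter_coeff (group_set g) H (length zs)"
  have bdd: "bdd_above (?S ` G)"
    using shatter_coeff_le_card_power[OF Hpm] by (intro bdd_aboveI) blast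
  show ?thesis
  proof (cases "group_set g = {}")
    case False
    then obtain x0 where "x0 \<in> group_set g"
      by blast
    then have "card (traces ((\<lambda>c x. g x * symdiff_ind c cstar x) ` group_realizable G H) zs)
        \<le> ?S g"
      using G01 g Hpm
      by (intro card_traces_masked_le_shatter_coeff) (auto simp: group_realizable_def)
    also have "\<dots> \<le> (SUP g\<in>G. ?S g)"
      using g bdd by (rule cSUP_upper)
    finally show ?thesis .
  next
    case True
    then have "card (traces ((\<lambda>c x. g x * symdiff_ind c cstar x) ` group_realizable G H) zs)
        \<le> 1"
      using G01 g by (intro card_traces_masked_empty_group) auto
    also have "\<dots> \<le> ?S g1"
      using g1(2) one_le_shatter_coeff[OF Hpm _ \<open>H \<noteq> {}\<close>] by blast
    also have "\<dots> \<le> (SUP g\<in>G. ?S g)"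
      using g1(1) bdd by (rule cSUP_upper)
    finally show ?thesis .
  qed
qed

theorem mainTheorem4:
  fixes G :: "('a \<Rightarrow> int) set" and H :: "('a \<Rightarrow> int) set" and cstar :: "'a \<Rightarrow> int"
  assumes G01: "\<forall>g\<in>G. \<forall>x. g x \<in> {0, 1}"
    and Hpm: "\<forall>h\<in>H. \<forall>x. h x \<in> {-1, 1}"
    and cstar: "cstar \<in> group_realizable G H"
  shows
    "(\<forall>g\<in>G. group_set g \<noteq> {} \<longrightarrow> (\<forall>k\<ge>1.
        shatter_coeff UNIV
          ((\<lambda>c. \<lambda>x. g x * symdiff_ind c cstar x) ` group_realizable G H) k
        \<le> shatter_coeff (group_set g) H k))
     \<and>
     ((G \<noteq> {} \<longrightarrow> (\<exists>g\<in>G. group_set g \<noteq> {})) \<longrightarrow> (\<forall>k\<ge>1.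
        shatter_coeff UNIV
          {(\<lambda>x. g x * symdiff_ind c cstar x) | g c. g \<in> G \<and> c \<in> group_realizable G H} k
        \<le> shatter_coeff UNIV G k * (SUP g\<in>G. shatter_coeff (group_set g) H k)))"
  proof (intro conjI ballI impI allI)
  fix g and k :: nat
  assume "g \<in> G" and "group_set g \<noteq> {}"
  then obtain x0 where "x0 \<in> group_set g"
    by blast
  then have "card (traces ((\<lambda>c x. g x * symdiff_ind c cstar x) ` group_realizable G H) zs)
      \<le> shatter_coeff (group_set g) H (length zs)" for zs
    using G01 Hpm \<open>g \<in> G\<close>
    by (intro card_traces_masked_le_shatter_coeff) (auto simp: group_realizable_def)
  then show "shatter_coeff UNIV ((\<lambda>c x. g x * symdiff_ind c cstar x) ` group_realizable G H) k
      \<le> shatter_coeff (group_set g) H k"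
    by (intro shatter_coeff_leI) auto
next
  fix k :: nat
  assume nonempty_group: "G \<noteq> {} \<longrightarrow> (\<exists>g\<in>G. group_set g \<noteq> {})"
  have "card (traces ((\<lambda>c x. g x * symdiff_ind c cstar x) ` group_realizable G H) zs)
      \<le> (SUP g\<in>G. shatter_coeff (group_set g) H k)" if "g \<in> G" "length zs = k" for g zs
  proof -
    obtain g1 where "g1 \<in> G" "group_set g1 \<noteq> {}"
      using nonempty_group \<open>g \<in> G\<close> by blast
    moreover have "H \<noteq> {}"
      using cstar \<open>g1 \<in> G\<close> by (auto simp: group_realizable_def)
    ultimately show ?thesis
      using card_traces_masked_le_SUP[OF G01 Hpm] that by blast
  qed
  then show "shatter_coeff UNIV
      {\<lambda>x. g x * symdiff_ind c cstar x | g c. g \<in> G \<and> c \<in> group_realizable G H} k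
      \<le> shatter_coeff UNIV G k * (SUP g\<in>G. shatter_coeff (group_set g) H k)"
    by (intro shatter_coeff_products_le[OF G01]) auto
qed

end
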